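(* Let $\sim_{\mathrm{NC}}$ be the equivalence relation on $S_n$ generated by $\sigma\sim_{\mathrm{NC}}\sigma s_i$ whenever $1\le i<n$ and $i\in\{\sigma(i),\sigma(i+1)\}$. Then the equivalence class of $\sim_{\mathrm{NC}}$ containing the identity is exactly $\mathrm{NC}_n$.
   Context: $s_i=(i,i+1)$ and $\sigma s_i=\sigma\circ s_i$. A set partition of $[n]$ is noncrossing if there are no distinct blocks $P,Q$ with $a,b\in P$, $c,d\in Q$, $a<c<b<d$. To a noncrossing partition associate $\sigma\in S_n$ acting on each block $\{a_1<\dots<a_p\}$ by $\sigma(a_j)=a_{j-1}$ ($j\ge2$), $\sigma(a_1)=a_p$; $\mathrm{NC}_n$ is the set of these (noncrossing) permutations. *)

theory Defs
  imports "HOL-Combinatorics.Combinatorics"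
begin

text \<open>Permutations of [n] = {1..n} are functions nat to nat that permute {1..n}
  (identity outside). The simple transposition s_i = (i, i+1); sigma s_i is sigma composed with s_i.\<close>

definition simple_transp :: "nat \<Rightarrow> nat \<Rightarrow> nat" where
  "simple_transp i = Transposition.transpose i (Suc i)"

definition nc_step :: "nat \<Rightarrow> (nat \<Rightarrow> nat) \<Rightarrow> (nat \<Rightarrow> nat) \<Rightarrow> bool" where
  "nc_step n \<sigma> \<tau> \<longleftrightarrow> \<sigma> permutes {1..n} \<and>
     (\<exists>i. 1 \<le> i \<and> i < n \<and> i \<in> {\<sigma> i, \<sigma> (Suc i)} \<and> \<tau> = \<sigma> \<circ> simple_transp i)"

definition nc_equiv :: "nat \<Rightarrow> (nat \<Rightarrow> nat) \<Rightarrow> (nat \<Rightarrow> nat) \<Rightarrow> bool" where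
  "nc_equiv n \<sigma> \<tau> \<longleftrightarrow> \<sigma> permutes {1..n} \<and> \<tau> permutes {1..n} \<and>
     (\<sigma>, \<tau>) \<in> ({(a, b). nc_step n a b} \<union> {(a, b). nc_step n b a})\<^sup>*"

definition set_partition :: "nat \<Rightarrow> nat set set \<Rightarrow> bool" where
  "set_partition n P \<longleftrightarrow> partition_on {1..n} P"

definition noncrossing :: "nat set set \<Rightarrow> bool" where
  "noncrossing P \<longleftrightarrow> \<not> (\<exists>B\<in>P. \<exists>C\<in>P. B \<noteq> C \<and>
      (\<exists>a b c d. a \<in> B \<and> b \<in> B \<and> c \<in> C \<and> d \<in> C \<and> a < c \<and> c < b \<and> b < d))"

definition partition_perm :: "nat set set \<Rightarrow> nat \<Rightarrow> nat" where
  "partition_perm P x =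
     (if \<exists>B\<in>P. x \<in> B then
        (let B = (THE B. B \<in> P \<and> x \<in> B) in
           if \<exists>y\<in>B. y < x then Max {y\<in>B. y < x} else Max B)
      else x)"

definition NC :: "nat \<Rightarrow> (nat \<Rightarrow> nat) set" where
  "NC n = {partition_perm P | P. set_partition n P \<and> noncrossing P}"

end

theory Submission
  imports Defs "HOL-Library.Product_Lexorder"
begin

text \<open>Every element of \<open>NC\<^sub>n\<close> is \<open>partition_perm P\<close> for a noncrossing partition \<open>P\<close>, and
  right multiplication by \<open>s\<^sub>i\<close> acts on \<open>P\<close>: if \<open>\<sigma>\<close> fixes \<open>i\<close>, then \<open>{i}\<close> is a block and
  \<open>\<sigma> s\<^sub>i\<close> belongs to the partition obtained by merging \<open>{i}\<close> into the block of \<open>i + 1\<close>; if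
  \<open>\<sigma> (i + 1) = i\<close>, then \<open>i\<close> and \<open>i + 1\<close> share a block and \<open>\<sigma> s\<^sub>i\<close> comes from splitting \<open>i\<close>
  off it. Both operations preserve noncrossingness, so the class of the identity lies in \<open>NC\<^sub>n\<close>.

  Conversely, in a noncrossing partition with a non-singleton block, take such a block \<open>B\<close> of
  least width \<open>max B - min B\<close>, with smallest elements \<open>a < b\<close>. If \<open>b = a + 1\<close>, splitting \<open>a\<close> off
  lowers the total width of the partition. Otherwise the block of \<open>b - 1\<close> is nested between
  \<open>a\<close> and \<open>b\<close>, hence a singleton by minimality, and merging it into \<open>B\<close> keeps the total width
  but lowers the number of blocks. Induction on the pair (total width, number of blocks), ordered
  lexicographically, connects every element of \<open>NC\<^sub>n\<close> to the identity.\<close>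

lemma Max_insert_le_member:
  fixes A :: "'a::linorder set"
  assumes "finite A" "a \<in> A" "x \<le> a"
  shows "Max (insert x A) = Max A"
proof -
  have "x \<le> Max A"
    using assms Max_ge[OF assms(1,2)] by (blast intro: order_trans)
  moreover have "A \<noteq> {}"
    using assms(2) by blast
  ultimately show ?thesis
    using Max_insert[OF assms(1)] by (simp add: max_absorb2)
qed

lemma Min_Diff_Min:
  fixes B :: "'a::linorder set"
  assumes B: "finite B" "B - {Min B} \<noteq> {}"
  shows "Min (B - {Min B}) \<in> B" "Min B < Min (B - {Min B})"
    and "\<And>y. y \<in> B \<Longrightarrow> Min B < y \<Longrightarrow> Min (B - {Min B}) \<le> y"
proof -
  have "Min (B - {Min B}) \<in> B - {Min B}"
    using B by (intro Min_in) auto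
  moreover from this have "Min B \<le> Min (B - {Min B})"
    using B(1) by simp
  ultimately show "Min (B - {Min B}) \<in> B" "Min B < Min (B - {Min B})"
    by auto
  show "Min (B - {Min B}) \<le> y" if "y \<in> B" "Min B < y" for y
    using that B(1) by (intro Min_le) auto
qed

section \<open>The permutation of a partition\<close>

definition cyclic_pred :: "nat set \<Rightarrow> nat \<Rightarrow> nat" where
  "cyclic_pred B x = (if \<exists>y\<in>B. y < x then Max {y\<in>B. y < x} else Max B)"

lemma cyclic_pred_in:
  assumes "finite B" "x \<in> B"
  shows "cyclic_pred B x \<in> B"
proof (cases "\<exists>y\<in>B. y < x")
  case True
  then have "Max {y\<in>B. y < x} \<in> {y\<in>B. y < x}"
    using assms(1) by (intro Max_in) auto
  then show ?thesis using True by (simp add: cyclic_pred_def)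
qed (use assms in \<open>auto simp: cyclic_pred_def intro: Max_in\<close>)

lemma cyclic_pred_less:
  assumes "finite B" "y \<in> B" "y < x"
  shows "y \<le> cyclic_pred B x" "cyclic_pred B x < x"
proof -
  have "Max {y\<in>B. y < x} \<in> {y\<in>B. y < x}"
    using assms by (intro Max_in) auto
  moreover have "y \<le> Max {y\<in>B. y < x}"
    using assms by (intro Max_ge) auto
  ultimately show "y \<le> cyclic_pred B x" "cyclic_pred B x < x"
    using assms by (auto simp: cyclic_pred_def)
qed

lemma cyclic_pred_Min:
  assumes "\<forall>y\<in>B. x \<le> y"
  shows "cyclic_pred B x = Max B"
  using assms by (auto simp: cyclic_pred_def)

lemma cyclic_pred_fixed_imp_singleton:
  assumes "finite B" "x \<in> B" "cyclic_pred B x = x"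
  shows "B = {x}"
proof -
  have min: "\<forall>y\<in>B. x \<le> y"
    using cyclic_pred_less[OF assms(1)] assms(3) by (metis less_irrefl not_le)
  then have "Max B = x"
    using assms by (simp add: cyclic_pred_Min)
  then show ?thesis
    using min assms(1,2) by (auto intro: antisym)
qed

lemma inj_on_cyclic_pred:
  assumes "finite B"
  shows "inj_on (cyclic_pred B) B"
proof -
  have "cyclic_pred B x \<noteq> cyclic_pred B y" if "x \<in> B" "y \<in> B" "x < y" for x y
  proof (cases "\<forall>z\<in>B. x \<le> z")
    case True
    have "cyclic_pred B y < y" "y \<le> Max B"
      using cyclic_pred_less[OF assms that(1,3)] assms that(2) by auto
    then show ?thesis using True by (simp add: cyclic_pred_Min)
  next
    case False
    then obtain z where "z \<in> B" "z < x" by (auto simp: not_le)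
    then show ?thesis
      using cyclic_pred_less[OF assms] that by (metis leD order_less_trans)
  qed
  then show ?thesis
    by (intro inj_onI) (metis linorder_neqE_nat)
qed

lemma cyclic_pred_singleton [simp]: "cyclic_pred {x} x = x"
  by (simp add: cyclic_pred_def)

lemma cyclic_pred_insert_predecessor:
  assumes "finite B" "i \<notin> B" "Suc i \<in> B"
  shows "cyclic_pred (insert i B) i = cyclic_pred B (Suc i)"
    "cyclic_pred (insert i B) (Suc i) = i"
    "x \<in> B \<Longrightarrow> x \<noteq> Suc i \<Longrightarrow> cyclic_pred (insert i B) x = cyclic_pred B x"
proof -
  have Max_eq: "Max (insert i B) = Max B"
    using assms(1,3) by (rule Max_insert_le_member) simp
  have "{y\<in>insert i B. y < i} = {y\<in>B. y < Suc i}"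
    and "(\<exists>y\<in>insert i B. y < i) \<longleftrightarrow> (\<exists>y\<in>B. y < Suc i)"
    using assms by (auto simp: less_Suc_eq)
  then show "cyclic_pred (insert i B) i = cyclic_pred B (Suc i)"
    unfolding cyclic_pred_def Max_eq by presburger
  have "Max (insert i {y\<in>B. y < i}) = i"
    by (intro Max_eqI) (use assms(1) in auto)
  moreover have "{y\<in>insert i B. y < Suc i} = insert i {y\<in>B. y < i}"
    using assms by (auto simp: less_Suc_eq)
  ultimately show "cyclic_pred (insert i B) (Suc i) = i"
    by (simp add: cyclic_pred_def)
  assume x: "x \<in> B" "x \<noteq> Suc i"
  show "cyclic_pred (insert i B) x = cyclic_pred B x"
  proof (cases "x < i")
    case True
    then have "{y\<in>insert i B. y < x} = {y\<in>B. y < x}" by auto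
    then show ?thesis using Max_eq True by (simp add: cyclic_pred_def)
  next
    case False
    with x assms(2) have "Suc i < x" by (metis Suc_lessI linorder_neqE_nat)
    then have "{y\<in>insert i B. y < x} = insert i {y\<in>B. y < x}"
      and Suc_i: "Suc i \<in> {y\<in>B. y < x}" using assms(3) by auto
    moreover have "Max (insert i {y\<in>B. y < x}) = Max {y\<in>B. y < x}"
      using Suc_i assms(1) by (intro Max_insert_le_member) auto
    ultimately show ?thesis by (auto simp: cyclic_pred_def)
  qed
qed

lemma partition_on_block_unique:
  assumes "partition_on A P" "B \<in> P" "C \<in> P" "x \<in> B" "x \<in> C"
  shows "B = C"
  using assms unfolding partition_on_def disjoint_def by blast

lemma partition_on_finite_block:
  assumes "partition_on A P" "finite A" "B \<in> P"
  shows "finite B"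
  using assms by (metis Union_upper finite_subset partition_onD1)

lemma partition_perm_block:
  assumes "partition_on A P" "B \<in> P" "x \<in> B"
  shows "partition_perm P x = cyclic_pred B x"
proof -
  have "(THE B. B \<in> P \<and> x \<in> B) = B"
    using assms partition_on_block_unique[OF assms(1)] by (intro the_equality) auto
  then show ?thesis
    using assms unfolding partition_perm_def cyclic_pred_def by (auto simp: Let_def)
qed

lemma partition_perm_outside:
  "x \<notin> \<Union>P \<Longrightarrow> partition_perm P x = x"
  unfolding partition_perm_def by auto

lemma partition_perm_in_block:
  assumes "partition_on A P" "finite A" "B \<in> P" "x \<in> B"
  shows "partition_perm P x \<in> B"
  using assms partition_perm_block cyclic_pred_in partition_on_finite_block by metis

lemma partition_perm_permutes:
  assumes P: "partition_on A P" and A: "finite A"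
  shows "partition_perm P permutes A"
proof (rule bij_imp_permutes)
  have "inj_on (partition_perm P) A"
  proof (rule inj_onI)
    fix x y assume "x \<in> A" "y \<in> A" and eq: "partition_perm P x = partition_perm P y"
    then obtain X Y where X: "X \<in> P" "x \<in> X" and Y: "Y \<in> P" "y \<in> Y"
      using partition_onD1[OF P] by blast
    have "X = Y"
      using partition_perm_in_block[OF P A] X Y eq partition_on_block_unique[OF P X(1) Y(1)] by metis
    then show "x = y"
      using eq X Y inj_on_cyclic_pred[OF partition_on_finite_block[OF P A X(1)]]
      by (simp add: partition_perm_block[OF P] inj_on_def)
  qed
  moreover have "partition_perm P ` A \<subseteq> A"
    using partition_perm_in_block[OF P A] partition_onD1[OF P] by blast
  ultimately show "bij_betw (partition_perm P) A A"
    using A by (simp add: bij_betw_def endo_inj_surj)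
  show "x \<notin> A \<Longrightarrow> partition_perm P x = x" for x
    using partition_onD1[OF P] by (simp add: partition_perm_outside)
qed

lemma partition_perm_eq_id:
  assumes P: "partition_on A P" and singletons: "\<forall>B\<in>P. card B = 1"
  shows "partition_perm P = id"
proof
  fix x
  show "partition_perm P x = id x"
  proof (cases "x \<in> \<Union>P")
    case True
    then obtain B where B: "B \<in> P" "x \<in> B"
      by blast
    then have "B = {x}"
      using singletons by (metis card_1_singletonE singletonD)
    then show ?thesis
      using partition_perm_block[OF P B] by simp
  qed (simp add: partition_perm_outside)
qed

section \<open>Merging a singleton into a block and splitting it off\<close>

definition merge_singleton :: "'a set set \<Rightarrow> 'a \<Rightarrow> 'a set \<Rightarrow> 'a set set" where
  "merge_singleton P i B = insert (insert i B) (P - {{i}, B})"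

definition split_off :: "'a set set \<Rightarrow> 'a \<Rightarrow> 'a set \<Rightarrow> 'a set set" where
  "split_off P i B = insert {i} (insert (B - {i}) (P - {B}))"

lemma partition_on_merge_blocks:
  assumes P: "partition_on A P" and R: "R \<subseteq> P" "R \<noteq> {}"
  shows "partition_on A (insert (\<Union>R) (P - R))"
proof (rule partition_onI)
  show "\<Union>(insert (\<Union>R) (P - R)) = A"
    using partition_onD1[OF P] R by auto
  have "\<Union>R \<noteq> {}"
    using partition_onD3[OF P] R by fastforce
  then show "{} \<notin> insert (\<Union>R) (P - R)"
    using partition_onD3[OF P] by auto
  have "disjnt C (\<Union>R)" if "C \<in> P - R" for C
    using that R pairwiseD[OF partition_onD2[OF P]] by auto
  then show "disjnt C D" if "C \<in> insert (\<Union>R) (P - R)" "D \<in> insert (\<Union>R) (P - R)" "C \<noteq> D" for C D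
    using that pairwiseD[OF partition_onD2[OF P]] by (auto intro: disjnt_sym)
qed

lemma partition_on_refine_block:
  assumes P: "partition_on A P" and B: "B \<in> P" and R: "partition_on B R"
  shows "partition_on A (R \<union> (P - {B}))"
proof (rule partition_onI)
  show "\<Union>(R \<union> (P - {B})) = A"
    using partition_onD1[OF P] partition_onD1[OF R] B by auto
  show "{} \<notin> R \<union> (P - {B})"
    using partition_onD3[OF P] partition_onD3[OF R] by auto
  have cross: "disjnt C D" if "C \<in> R" "D \<in> P - {B}" for C D
  proof -
    have "disjnt B D"
      using that(2) B pairwiseD[OF partition_onD2[OF P]] by auto
    moreover have "C \<subseteq> B"
      using that(1) partition_onD1[OF R] by blast
    ultimately show ?thesis
      by (rule disjnt_subset1)
  qed
  show "disjnt C D" if "C \<in> R \<union> (P - {B})" "D \<in> R \<union> (P - {B})" "C \<noteq> D" for C D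
    using that cross[of C D] cross[of D C] disjnt_sym
      pairwiseD[OF partition_onD2[OF P]] pairwiseD[OF partition_onD2[OF R]] by blast
qed

lemma partition_on_merge_singleton:
  assumes "partition_on A P" "{i} \<in> P" "B \<in> P"
  shows "partition_on A (merge_singleton P i B)"
  using partition_on_merge_blocks[OF assms(1), of "{{i}, B}"] assms
  by (simp add: merge_singleton_def)

lemma partition_on_split_off:
  assumes "partition_on A P" "B \<in> P" "i \<in> B" "B \<noteq> {i}"
  shows "partition_on A (split_off P i B)"
proof -
  have "partition_on B {{i}, B - {i}}"
    using assms(3,4) by (auto simp: partition_on_def disjoint_def)
  then have "partition_on A ({{i}, B - {i}} \<union> (P - {B}))"
    by (rule partition_on_refine_block[OF assms(1,2)])
  then show ?thesis
    by (simp add: split_off_def)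
qed

lemma merge_singleton_split_off:
  assumes "partition_on A P" "B \<in> P" "i \<in> B" "B \<noteq> {i}"
  shows "merge_singleton (split_off P i B) i (B - {i}) = P"
proof -
  have "{i} \<notin> P - {B}" "B - {i} \<notin> P - {B}"
    using assms partition_on_block_unique[OF assms(1)] by blast+
  then have "split_off P i B - {{i}, B - {i}} = P - {B}"
    unfolding split_off_def by auto
  then show ?thesis
    using assms(2,3) by (auto simp: merge_singleton_def insert_absorb)
qed

lemma partition_perm_merge_singleton:
  assumes P: "partition_on A P" "finite A" and i: "{i} \<in> P" and B: "B \<in> P" "Suc i \<in> B"
  shows "partition_perm (merge_singleton P i B) = partition_perm P \<circ> simple_transp i"
proof
  fix x
  let ?Q = "merge_singleton P i B"
  have Q: "partition_on A ?Q"
    using partition_on_merge_singleton[OF P(1) i B(1)] .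
  have iB: "i \<notin> B"
    using partition_on_block_unique[OF P(1) i B(1)] B(2) by auto
  have fin: "finite B"
    using partition_on_finite_block[OF P B(1)] .
  have iB_Q: "insert i B \<in> ?Q"
    by (simp add: merge_singleton_def)
  consider "x = i" | "x = Suc i" | "x \<in> B" "x \<noteq> Suc i"
    | C where "C \<in> P" "x \<in> C" "C \<noteq> B" "C \<noteq> {i}" | "x \<notin> \<Union>P"
    by blast
  then show "partition_perm ?Q x = (partition_perm P \<circ> simple_transp i) x"
  proof cases
    case 1
    then show ?thesis
      using partition_perm_block[OF Q iB_Q] partition_perm_block[OF P(1) B]
        cyclic_pred_insert_predecessor(1)[OF fin iB B(2)]
      by (simp add: simple_transp_def)
  next
    case 2
    then show ?thesis
      using partition_perm_block[OF Q iB_Q] partition_perm_block[OF P(1) i] B(2)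
        cyclic_pred_insert_predecessor(2)[OF fin iB B(2)]
      by (simp add: simple_transp_def)
  next
    case 3
    then have "x \<noteq> i"
      using iB by auto
    then show ?thesis
      using 3 partition_perm_block[OF Q iB_Q] partition_perm_block[OF P(1) B(1)]
        cyclic_pred_insert_predecessor(3)[OF fin iB B(2)]
      by (simp add: simple_transp_def)
  next
    case 4
    then have "x \<noteq> i" "x \<noteq> Suc i" "C \<in> ?Q"
      using partition_on_block_unique[OF P(1)] i B by (auto simp: merge_singleton_def)
    then show ?thesis
      using 4 partition_perm_block[OF Q, of C x] partition_perm_block[OF P(1), of C x]
      by (simp add: simple_transp_def)
  next
    case 5
    moreover have "\<Union>?Q = \<Union>P"
      using partition_onD1[OF Q] partition_onD1[OF P(1)] by simp
    moreover have "x \<noteq> i" "x \<noteq> Suc i"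
      using 5 i B by auto
    ultimately show ?thesis
      by (simp add: partition_perm_outside simple_transp_def)
  qed
qed

section \<open>Noncrossing partitions\<close>

lemma noncrossingD:
  assumes "noncrossing P" "B \<in> P" "C \<in> P" "B \<noteq> C" "a \<in> B" "b \<in> B" "c \<in> C" "d \<in> C"
    "a < c" "c < b" "b < d"
  shows False
  using assms(1) unfolding noncrossing_def
  by (rule notE) (use assms(2-) in \<open>intro bexI[of _ B] bexI[of _ C] conjI exI[of _ a] exI[of _ b] exI[of _ c] exI[of _ d]\<close>)

lemma noncrossingI:
  assumes "\<And>B C a b c d. B \<in> P \<Longrightarrow> C \<in> P \<Longrightarrow> B \<noteq> C \<Longrightarrow> a \<in> B \<Longrightarrow> b \<in> B \<Longrightarrow>
    c \<in> C \<Longrightarrow> d \<in> C \<Longrightarrow> a < c \<Longrightarrow> c < b \<Longrightarrow> b < d \<Longrightarrow> False"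
  shows "noncrossing P"
  unfolding noncrossing_def by (intro notI, elim bexE exE conjE) (rule assms; assumption)

lemma noncrossing_subset:
  assumes "noncrossing P" "Q \<subseteq> P"
  shows "noncrossing Q"
  using noncrossingD[OF assms(1)] assms(2) by (intro noncrossingI) blast

lemma noncrossing_insert_singleton:
  assumes nc: "noncrossing P"
  shows "noncrossing (insert {x} P)"
proof (rule noncrossingI)
  fix B C a b c d
  assume B: "B \<in> insert {x} P" "a \<in> B" "b \<in> B" and C: "C \<in> insert {x} P" "c \<in> C" "d \<in> C"
    and BC: "B \<noteq> C" and order: "a < c" "c < b" "b < d"
  have "B \<in> P"
    using B order by auto
  moreover have "C \<in> P"
    using C order by auto
  ultimately show False
    using noncrossingD[OF nc _ _ BC B(2,3) C(2,3) order] by blast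
qed

lemma noncrossing_shrink_block:
  assumes nc: "noncrossing P" and B: "B \<in> P" "B' \<subseteq> B"
  shows "noncrossing (insert B' (P - {B}))"
proof (rule noncrossingI)
  fix X Y a b c d
  assume X: "X \<in> insert B' (P - {B})" "a \<in> X" "b \<in> X" and Y: "Y \<in> insert B' (P - {B})" "c \<in> Y" "d \<in> Y"
    and XY: "X \<noteq> Y" and order: "a < c" "c < b" "b < d"
  define enlarge where "enlarge Z = (if Z = B' then B else Z)" for Z
  have blocks: "enlarge X \<in> P" "enlarge Y \<in> P" "enlarge X \<noteq> enlarge Y"
    using X(1) Y(1) XY B(1) by (auto simp: enlarge_def)
  have "X \<subseteq> enlarge X" "Y \<subseteq> enlarge Y"
    using B(2) by (auto simp: enlarge_def)
  then have "a \<in> enlarge X" "b \<in> enlarge X" "c \<in> enlarge Y" "d \<in> enlarge Y"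
    using X Y by auto
  then show False
    using noncrossingD[OF nc blocks] order by blast
qed

lemma noncrossing_insert_adjacent:
  assumes nc: "noncrossing P" and B: "B \<in> P" "Suc i \<in> B"
    and others: "\<And>C. C \<in> P \<Longrightarrow> C \<noteq> B \<Longrightarrow> i \<notin> C \<and> Suc i \<notin> C"
  shows "noncrossing (insert (insert i B) (P - {B}))" (is "noncrossing ?Q")
proof (rule noncrossingI)
  fix X Y a b c d
  assume X: "X \<in> ?Q" "a \<in> X" "b \<in> X" and Y: "Y \<in> ?Q" "c \<in> Y" "d \<in> Y"
    and XY: "X \<noteq> Y" and order: "a < c" "c < b" "b < d"
  define collapse where "collapse u = (if u = i then Suc i else u)" for u
  define restore where "restore Z = (if Z = insert i B then B else Z)" for Z
  have outside: "i \<notin> Z" "Suc i \<notin> Z" if "Z \<in> ?Q" "Z \<noteq> insert i B" for Z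
    using that others[of Z] by blast+
  have restore_in: "restore Z \<in> P" if "Z \<in> ?Q" for Z
    using that B(1) by (auto simp: restore_def)
  have collapse_in: "collapse u \<in> restore Z" if "Z \<in> ?Q" "u \<in> Z" for Z u
    using that outside B(2) by (auto simp: collapse_def restore_def)
  have restore_ne: "restore X \<noteq> restore Y"
    using X(1) Y(1) XY by (auto simp: restore_def)
  \<comment> \<open>collapsing i onto Suc i keeps strict order between different blocks,
      because i and Suc i lie in the same block\<close>
  have collapse_less: "collapse u < collapse v"
    if "Z \<in> ?Q" "Z' \<in> ?Q" "Z \<noteq> Z'" "u \<in> Z" "v \<in> Z'" "u < v" for Z Z' u v
  proof (cases "u = i")
    case True
    then have "Z = insert i B"
      using that(1,4) outside by blast
    then have "Suc i \<notin> Z'"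
      using that(2,3) outside by blast
    then have "v \<noteq> Suc i"
      using that(5) by blast
    then show ?thesis
      using True that(6) by (auto simp: collapse_def)
  next
    case False
    then show ?thesis
      using that(6) by (auto simp: collapse_def)
  qed
  show False
    using noncrossingD[OF nc restore_in[OF X(1)] restore_in[OF Y(1)] restore_ne
        collapse_in[OF X(1,2)] collapse_in[OF X(1,3)] collapse_in[OF Y(1,2)] collapse_in[OF Y(1,3)]]
      collapse_less[OF X(1) Y(1) XY X(2) Y(2) order(1)]
      collapse_less[OF Y(1) X(1) XY[symmetric] Y(2) X(3) order(2)]
      collapse_less[OF X(1) Y(1) XY X(3) Y(3) order(3)]
    by blast
qed

lemma noncrossing_merge_singleton:
  assumes P: "partition_on A P" and nc: "noncrossing P" and i: "{i} \<in> P" and B: "B \<in> P" "Suc i \<in> B"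
  shows "noncrossing (merge_singleton P i B)"
proof -
  have "noncrossing (P - {{i}})"
    using nc by (rule noncrossing_subset) blast
  moreover have "B \<in> P - {{i}}"
    using B by auto
  moreover have "i \<notin> C \<and> Suc i \<notin> C" if "C \<in> P - {{i}}" "C \<noteq> B" for C
    using that partition_on_block_unique[OF P _ i] partition_on_block_unique[OF P _ B(1)] B(2) by blast
  ultimately have "noncrossing (insert (insert i B) (P - {{i}} - {B}))"
    using B(2) by (intro noncrossing_insert_adjacent)
  then show ?thesis
    unfolding merge_singleton_def Diff_insert2[of P "{i}" "{B}"] .
qed

lemma noncrossing_split_off:
  assumes "noncrossing P" "B \<in> P"
  shows "noncrossing (split_off P i B)"
  unfolding split_off_def
  by (intro noncrossing_insert_singleton noncrossing_shrink_block assms Diff_subset)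

lemma simple_transp_involution [simp]: "simple_transp i \<circ> simple_transp i = id"
  by (simp add: simple_transp_def)

lemma simple_transp_permutes:
  assumes "1 \<le> i" "i < n"
  shows "simple_transp i permutes {1..n}"
  unfolding simple_transp_def using assms by (intro permutes_swap_id) auto

lemma nc_step_sym:
  assumes "nc_step n \<sigma> \<tau>"
  shows "nc_step n \<tau> \<sigma>"
proof -
  obtain i where \<sigma>: "\<sigma> permutes {1..n}" and i: "1 \<le> i" "i < n" "i \<in> {\<sigma> i, \<sigma> (Suc i)}"
    and \<tau>: "\<tau> = \<sigma> \<circ> simple_transp i"
    using assms unfolding nc_step_def by blast
  have "\<tau> permutes {1..n}"
    unfolding \<tau> by (rule permutes_compose[OF simple_transp_permutes[OF i(1,2)] \<sigma>])
  moreover have "\<tau> i = \<sigma> (Suc i)" "\<tau> (Suc i) = \<sigma> i"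
    by (simp_all add: \<tau> simple_transp_def)
  moreover have "\<sigma> = \<tau> \<circ> simple_transp i"
    by (simp add: \<tau> comp_assoc)
  ultimately show ?thesis
    using i unfolding nc_step_def by auto
qed

lemma NC_iff: "\<sigma> \<in> NC n \<longleftrightarrow> (\<exists>P. partition_on {1..n} P \<and> noncrossing P \<and> \<sigma> = partition_perm P)"
  by (auto simp: NC_def set_partition_def)

lemma id_in_NC: "id \<in> NC n"
proof -
  have "noncrossing ((\<lambda>x. {x}) ` {1..n})"
    by (rule noncrossingI) auto
  moreover have "partition_perm ((\<lambda>x. {x}) ` {1..n}) = id"
    using partition_perm_eq_id[OF partition_on_singletons] by simp
  ultimately show ?thesis
    using partition_on_singletons unfolding NC_iff by metis
qed

lemma NC_closed_under_nc_step:
  assumes "\<sigma> \<in> NC n" "nc_step n \<sigma> \<tau>"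
  shows "\<tau> \<in> NC n"
proof -
  obtain P where P: "partition_on {1..n} P" "noncrossing P" and \<sigma>: "\<sigma> = partition_perm P"
    using assms(1) by (auto simp: NC_iff)
  obtain i where i: "1 \<le> i" "i < n" "i \<in> {\<sigma> i, \<sigma> (Suc i)}" and \<tau>: "\<tau> = \<sigma> \<circ> simple_transp i"
    using assms(2) unfolding nc_step_def by blast
  have "i \<in> \<Union>P" "Suc i \<in> \<Union>P"
    using partition_onD1[OF P(1)] i by auto
  then obtain C B where C: "C \<in> P" "i \<in> C" and B: "B \<in> P" "Suc i \<in> B"
    by blast
  from i(3) consider "\<sigma> i = i" | "\<sigma> (Suc i) = i"
    by auto
  then show ?thesis
  proof cases
    case 1
    then have "{i} \<in> P"
      using C partition_perm_block[OF P(1) C] \<sigma> partition_on_finite_block[OF P(1) _ C(1)]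
        cyclic_pred_fixed_imp_singleton by force
    then have "\<tau> = partition_perm (merge_singleton P i B)"
      using partition_perm_merge_singleton[OF P(1) _ _ B] \<sigma> \<tau> by simp
    moreover have "partition_on {1..n} (merge_singleton P i B)" "noncrossing (merge_singleton P i B)"
      using partition_on_merge_singleton[OF P(1) _ B(1)] noncrossing_merge_singleton[OF P _ B]
        \<open>{i} \<in> P\<close> by auto
    ultimately show ?thesis
      unfolding NC_iff by blast
  next
    case 2
    then have "i \<in> B" "B \<noteq> {i}"
      using partition_perm_in_block[OF P(1) _ B] \<sigma> B(2) by auto
    let ?Q = "split_off P i B"
    have Q: "partition_on {1..n} ?Q" "noncrossing ?Q"
      using partition_on_split_off[OF P(1) B(1) \<open>i \<in> B\<close> \<open>B \<noteq> {i}\<close>] noncrossing_split_off[OF P(2) B(1)]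
      by auto
    have "\<sigma> = partition_perm ?Q \<circ> simple_transp i"
      using partition_perm_merge_singleton[OF Q(1) _, of i "B - {i}"] B(2)
        merge_singleton_split_off[OF P(1) B(1) \<open>i \<in> B\<close> \<open>B \<noteq> {i}\<close>] \<sigma>
      by (simp add: split_off_def)
    then have "\<tau> = partition_perm ?Q"
      by (simp add: \<tau> comp_assoc)
    then show ?thesis
      using Q unfolding NC_iff by blast
  qed
qed

section \<open>Reducing a noncrossing partition to singletons\<close>

definition block_width :: "nat set \<Rightarrow> nat" where
  "block_width B = Max B - Min B"

definition total_width :: "nat set set \<Rightarrow> nat" where
  "total_width P = (\<Sum>B\<in>P. block_width B)"

lemma block_width_singleton [simp]: "block_width {x} = 0"
  by (simp add: block_width_def)

lemma block_width_Diff_Min_less: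
  assumes B: "finite B" "B - {Min B} \<noteq> {}"
  shows "block_width (B - {Min B}) < block_width B"
proof -
  have "Max (B - {Min B}) \<le> Max B"
    using B by (intro Max_mono) auto
  moreover have "Min B < Min (B - {Min B})" "Min (B - {Min B}) \<le> Max B"
    using Min_Diff_Min[OF B] B(1) by auto
  ultimately show ?thesis
    unfolding block_width_def by linarith
qed

lemma
  assumes P: "partition_on A P" "finite A" and i: "{i} \<in> P" and B: "B \<in> P" "i \<notin> B"
  shows total_width_merge_singleton:
      "total_width (merge_singleton P i B) + block_width B = total_width P + block_width (insert i B)"
    and card_merge_singleton: "card (merge_singleton P i B) < card P"
proof -
  have fin: "finite P"
    using finite_elements[OF P(2,1)] .
  have ne: "{i} \<noteq> B"
    using B(2) by auto
  have new: "insert i B \<notin> P - {{i}, B}"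
    using partition_on_block_unique[OF P(1) _ i, of "insert i B" i] by auto
  have rest: "{{i}, B} \<subseteq> P"
    using i B(1) by simp
  have "total_width P = total_width (P - {{i}, B}) + block_width B"
    using sum.subset_diff[OF rest fin, of block_width] ne by (simp add: total_width_def)
  moreover have "total_width (merge_singleton P i B) = block_width (insert i B) + total_width (P - {{i}, B})"
    using fin new by (simp add: total_width_def merge_singleton_def)
  ultimately show "total_width (merge_singleton P i B) + block_width B = total_width P + block_width (insert i B)"
    by simp
  have "card (P - {{i}, B}) = card P - 2"
    using fin rest ne by (simp add: card_Diff_subset)
  moreover have "2 \<le> card P"
    using card_mono[OF fin rest] ne by simp
  ultimately show "card (merge_singleton P i B) < card P"
    using fin new by (simp add: merge_singleton_def)
qed

lemma nc_step_merge_singleton: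
  assumes P: "partition_on {1..n} P" and i: "{i} \<in> P" and B: "B \<in> P" "Suc i \<in> B"
  shows "nc_step n (partition_perm P) (partition_perm (merge_singleton P i B))"
proof -
  have "i \<in> {1..n}" "Suc i \<in> {1..n}"
    using partition_onD1[OF P] i B by auto
  moreover have "partition_perm P i = i"
    using partition_perm_block[OF P i] by simp
  ultimately show ?thesis
    using partition_perm_permutes[OF P] partition_perm_merge_singleton[OF P _ i B]
    unfolding nc_step_def by auto
qed

lemma noncrossing_nested_block:
  assumes P: "partition_on A P" and nc: "noncrossing P" and B: "B \<in> P" "a \<in> B" "b \<in> B"
    and C: "C \<in> P" "C \<noteq> B" "c \<in> C" "a < c" "c < b" and x: "x \<in> C"
  shows "a < x \<and> x < b"
proof -
  have "x \<noteq> a" "x \<noteq> b"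
    using partition_on_block_unique[OF P B(1) C(1)] B C(2) x by auto
  moreover have "\<not> x < a"
    using noncrossingD[OF nc C(1) B(1) C(2) x C(3) B(2,3)] C(4,5) by auto
  moreover have "\<not> b < x"
    using noncrossingD[OF nc B(1) C(1) C(2)[symmetric] B(2,3) C(3) x] C(4,5) by auto
  ultimately show ?thesis
    by auto
qed

lemma smaller_partition_by_split:
  assumes P: "partition_on {1..n} P" and nc: "noncrossing P"
    and B: "B \<in> P" "Suc (Min B) \<in> B"
  obtains Q where "partition_on {1..n} Q" "noncrossing Q"
    "(total_width Q, card Q) < (total_width P, card P)"
    "nc_step n (partition_perm Q) (partition_perm P)"
proof
  define a where "a = Min B"
  let ?Q = "split_off P a B"
  have fin: "finite B"
    using partition_on_finite_block[OF P _ B(1)] by simp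
  have "B \<noteq> {}"
    using B(2) by blast
  then have "a \<in> B"
    using fin by (simp add: a_def)
  moreover have "Suc a \<in> B"
    using B(2) by (simp add: a_def)
  moreover from this have "B \<noteq> {a}"
    by auto
  ultimately have a: "a \<in> B" "Suc a \<in> B" "B \<noteq> {a}"
    by blast+
  show Q: "partition_on {1..n} ?Q" "noncrossing ?Q"
    using partition_on_split_off[OF P B(1) a(1,3)] noncrossing_split_off[OF nc B(1)] .
  have Q_blocks: "{a} \<in> ?Q" "B - {a} \<in> ?Q" "a \<notin> B - {a}" "Suc a \<in> B - {a}"
    using a(2) by (auto simp: split_off_def)
  have P_eq: "merge_singleton ?Q a (B - {a}) = P"
    using merge_singleton_split_off[OF P B(1) a(1,3)] .
  have "block_width (B - {a}) < block_width B"
    using block_width_Diff_Min_less[OF fin] Q_blocks(4) unfolding a_def by blast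
  then have "total_width ?Q < total_width P"
    using total_width_merge_singleton[OF Q(1) _ Q_blocks(1-3)] P_eq a(1) by (simp add: insert_absorb)
  then show "(total_width ?Q, card ?Q) < (total_width P, card P)"
    by simp
  show "nc_step n (partition_perm ?Q) (partition_perm P)"
    using nc_step_merge_singleton[OF Q(1) Q_blocks(1,2,4)] P_eq by simp
qed

lemma smaller_partition_by_merge:
  assumes P: "partition_on {1..n} P" and nc: "noncrossing P"
    and B: "B \<in> P" "Suc c \<in> B" "Min B < c" and c: "{c} \<in> P"
  obtains Q where "partition_on {1..n} Q" "noncrossing Q"
    "(total_width Q, card Q) < (total_width P, card P)"
    "nc_step n (partition_perm Q) (partition_perm P)"
proof
  let ?Q = "merge_singleton P c B"
  have fin: "finite B"
    using partition_on_finite_block[OF P _ B(1)] by simp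
  have cB: "c \<notin> B"
    using partition_on_block_unique[OF P c B(1), of c] B(2) by auto
  show Q: "partition_on {1..n} ?Q" "noncrossing ?Q"
    using partition_on_merge_singleton[OF P c B(1)] noncrossing_merge_singleton[OF P nc c B(1,2)] .
  have "B \<noteq> {}"
    using B(2) by blast
  then have "Min (insert c B) = Min B"
    using fin B(3) by simp
  moreover have "Max (insert c B) = Max B"
    by (rule Max_insert_le_member[OF fin B(2)]) simp
  ultimately have "total_width ?Q = total_width P"
    using total_width_merge_singleton[OF P _ c B(1) cB] by (simp add: block_width_def)
  then show "(total_width ?Q, card ?Q) < (total_width P, card P)"
    using card_merge_singleton[OF P _ c B(1) cB] by simp
  show "nc_step n (partition_perm ?Q) (partition_perm P)"
    using nc_step_merge_singleton[OF P c B(1,2)] by (rule nc_step_sym)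
qed

lemma singleton_nested_in_narrowest_block:
  assumes P: "partition_on A P" "finite A" and nc: "noncrossing P"
    and B: "B \<in> P" "a \<in> B" "b \<in> B"
    and narrowest: "\<And>C. C \<in> P \<Longrightarrow> card C \<noteq> 1 \<Longrightarrow> block_width B \<le> block_width C"
    and C: "C \<in> P" "C \<noteq> B" "c \<in> C" "a < c" "c < b"
  shows "C = {c}"
proof (rule ccontr)
  assume "C \<noteq> {c}"
  then have "card C \<noteq> 1"
    using C(3) by (auto simp: card_1_singleton_iff)
  then have "block_width B \<le> block_width C"
    by (rule narrowest[OF C(1)])
  moreover have "block_width C < b - a"
  proof -
    have "finite C" "C \<noteq> {}"
      using partition_on_finite_block[OF P C(1)] C(3) by auto
    then have "Max C \<in> C" "Min C \<in> C"
      by simp_all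
    then have "Max C < b" "a < Min C" "Min C \<le> Max C"
      using noncrossing_nested_block[OF P(1) nc B C] \<open>finite C\<close> by auto
    then show ?thesis
      unfolding block_width_def by linarith
  qed
  moreover have "b - a \<le> block_width B"
  proof -
    have "b \<le> Max B" "Min B \<le> a"
      using partition_on_finite_block[OF P B(1)] B(2,3) by simp_all
    then show ?thesis
      unfolding block_width_def by linarith
  qed
  ultimately show False
    by linarith
qed

lemma smaller_noncrossing_partition:
  assumes P: "partition_on {1..n} P" and nc: "noncrossing P" and B0: "B0 \<in> P" "card B0 \<noteq> 1"
  obtains Q where "partition_on {1..n} Q" "noncrossing Q"
    "(total_width Q, card Q) < (total_width P, card P)"
    "nc_step n (partition_perm Q) (partition_perm P)"
proof -
  obtain B where "B \<in> P \<and> card B \<noteq> 1"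
    and "\<forall>C. C \<in> P \<and> card C \<noteq> 1 \<longrightarrow> block_width B \<le> block_width C"
    using ex_has_least_nat[of "\<lambda>B. B \<in> P \<and> card B \<noteq> 1" B0 block_width] B0 by blast
  then have B: "B \<in> P" "card B \<noteq> 1"
    and narrowest: "\<And>C. C \<in> P \<Longrightarrow> card C \<noteq> 1 \<Longrightarrow> block_width B \<le> block_width C"
    by blast+
  have fin: "finite B"
    using partition_on_finite_block[OF P _ B(1)] by simp
  have "B \<noteq> {}"
    using partition_onD3[OF P] B(1) by blast
  then have a: "Min B \<in> B"
    using fin by simp
  have "B - {Min B} \<noteq> {}"
  proof
    assume "B - {Min B} = {}"
    then have "B = {Min B}"
      using a by blast
    then have "card B = card {Min B}"
      by (rule arg_cong)
    then show False
      using B(2) by simp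
  qed
  define b where "b = Min (B - {Min B})"
  have b: "b \<in> B" "Min B < b" "\<And>y. y \<in> B \<Longrightarrow> Min B < y \<Longrightarrow> b \<le> y"
    using Min_Diff_Min[OF fin \<open>B - {Min B} \<noteq> {}\<close>] unfolding b_def by blast+
  show ?thesis
  proof (cases "Suc (Min B) \<in> B")
    case True
    then show ?thesis
      by (rule smaller_partition_by_split[OF P nc B(1) _ that])
  next
    case False
    define c where "c = b - 1"
    have "b \<noteq> Suc (Min B)"
      using False b(1) by blast
    then have c: "Min B < c" "c < b" "Suc c = b"
      using b(2) unfolding c_def by arith+
    have "c \<notin> B"
    proof
      assume "c \<in> B"
      then have "b \<le> c"
        using b(3) c(1) by blast
      then show False
        using c(2) by simp
    qed
    moreover have "c \<in> \<Union>P"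
    proof -
      have "Min B \<in> {1..n}" "b \<in> {1..n}"
        using partition_onD1[OF P] B(1) a b(1) by blast+
      then have "c \<in> {1..n}"
        using c(1,2) by simp
      then show ?thesis
        using partition_onD1[OF P] by blast
    qed
    ultimately obtain C where C: "C \<in> P" "C \<noteq> B" "c \<in> C"
      by blast
    then have "C = {c}"
      by (intro singleton_nested_in_narrowest_block[OF P _ nc B(1) a b(1) narrowest C c(1,2)]) simp
    have "Suc c \<in> B" "Min B < c"
      using b(1) c(1,3) by simp_all
    moreover have "{c} \<in> P"
      using C(1) \<open>C = {c}\<close> by simp
    ultimately show ?thesis
      using that by (rule smaller_partition_by_merge[OF P nc B(1)])
  qed
qed

lemma partition_perm_reachable_from_id:
  assumes "partition_on {1..n} P" "noncrossing P"
  shows "(id, partition_perm P) \<in> {(\<sigma>, \<tau>). nc_step n \<sigma> \<tau>}\<^sup>*"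
  using assms
proof (induction "(total_width P, card P)" arbitrary: P rule: less_induct)
  case less
  show ?case
  proof (cases "\<forall>B\<in>P. card B = 1")
    case True
    then show ?thesis
      using partition_perm_eq_id[OF less.prems(1)] by simp
  next
    case False
    then obtain B where "B \<in> P" "card B \<noteq> 1"
      by blast
    then obtain Q where "partition_on {1..n} Q" "noncrossing Q"
      "(total_width Q, card Q) < (total_width P, card P)"
      and step: "nc_step n (partition_perm Q) (partition_perm P)"
      using smaller_noncrossing_partition[OF less.prems] by blast
    then have "(id, partition_perm Q) \<in> {(\<sigma>, \<tau>). nc_step n \<sigma> \<tau>}\<^sup>*"
      using less.hyps by blast
    then show ?thesis
      using step by (simp add: rtrancl.rtrancl_into_rtrancl)
  qed
qed

lemma NC_if_reachable_from_id:
  assumes "(id, \<sigma>) \<in> {(\<sigma>, \<tau>). nc_step n \<sigma> \<tau>}\<^sup>*"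
  shows "\<sigma> \<in> NC n"
  using assms
proof (induction rule: rtrancl_induct)
  case base
  show ?case
    by (rule id_in_NC)
next
  case (step \<rho> \<sigma>)
  then show ?case
    using NC_closed_under_nc_step by blast
qed

theorem corollary7p9:
  fixes n :: nat
  shows "{\<sigma>. nc_equiv n id \<sigma>} = NC n"
proof -
  have "{(\<sigma>, \<tau>). nc_step n \<sigma> \<tau>} \<union> {(\<sigma>, \<tau>). nc_step n \<tau> \<sigma>} = {(\<sigma>, \<tau>). nc_step n \<sigma> \<tau>}"
    using nc_step_sym by blast
  then have "nc_equiv n id \<sigma> \<longleftrightarrow> \<sigma> permutes {1..n} \<and> (id, \<sigma>) \<in> {(\<sigma>, \<tau>). nc_step n \<sigma> \<tau>}\<^sup>*" for \<sigma>
    by (simp add: nc_equiv_def permutes_id)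
  then show ?thesis
    using NC_if_reachable_from_id partition_perm_reachable_from_id partition_perm_permutes
    by (auto simp: NC_iff)
qed

end
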